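(* Let $\beta_1:\mathbb{R}\to\mathbb{R}^3$, $\beta_1(z')=(0,0,z')$, and $\beta_2:\mathbb{R}^2\to\mathbb{R}^3$, $\beta_2(z'')=(z''_1,z''_2,0)$. Let $dq_0^1$ and $dq_0^2$ be positive Radon measures on $\mathbb{R}$ and $\mathbb{R}^2$ respectively, each satisfying $\int_{|z|<1}|z|^2dq_0^l(z)+\int_{|z|\ge1}|z|\,dq_0^l(z)<\infty$, and jointly satisfying condition (B'). Let $H:\mathbb{R}^3\times\mathbb{R}^3\to\mathbb{R}$ be continuous, $\mathbb{Z}^3$-periodic in its first variable, with $H(y,0)\ge0$ for all $y$. Let $u$ be an upper semicontinuous $\mathbb{Z}^3$-periodic viscosity subsolution of $$H(y,\nabla v)+\max\Big\{-\int_{\mathbb{R}}[v(y+\beta_1(z'))-v(y)-\langle\beta_1(z'),\nabla v(y)\rangle]dq_0^1(z'),\ -\int_{\mathbb{R}^2}[v(y+\beta_2(z''))-v(y)-\langle\beta_2(z''),\nabla v(y)\rangle]dq_0^2(z'')\Big\}=0\ \text{in }\mathbb{T}^3.$$ If $u$ attains its maximum over $\mathbb{T}^3$ at some $\bar y$, then $u$ is constant on $\mathbb{T}^3$.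
   Context: $\mathbb{T}^3=[0,1]^3$; functions on it are $\mathbb{Z}^3$-periodic functions on $\mathbb{R}^3$. Condition (B'): let $S_0^l=\mathrm{supp}(dq_0^l)$, $l=1,2$. For any $y,y'\in\mathbb{T}^3$ there exist finitely many points $y_1=y,\dots,y_m=y'$ in $\mathbb{T}^3$ such that for any positive numbers $\varepsilon_i$ ($1\le i\le m$) one can choose subsets $J_i$, each either $J_i\subset S_0^1$ or $J_i\subset S_0^2$, such that if $J_i\subset S_0^l$ then $\int_{J_i}1\,dq_0^l>0$ and $y_i+\beta_l(z)\in B_{\varepsilon_i}(y_{i+1})$ (mod $\mathbb{Z}^3$) for all $z\in J_i$. Viscosity subsolution: for every $\hat y$ and $\phi\in C^2(\mathbb{R}^3)$ with $u-\phi$ attaining a global maximum at $\hat y$, $u(\hat y)=\phi(\hat y)$, the integrands with $\nabla v(\hat y)$ replaced by $\nabla\phi(\hat y)$ and $v$ replaced by $u$ are integrable and the left-hand side evaluated this way is $\le0$. *)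

theory Defs
  imports "HOL-Analysis.Analysis"
begin

text \<open>Points of the torus T^3 = [0,1]^3 (functions on it are Z^3-periodic functions on R^3).\<close>
definition torus3 :: "(real^3) set" where
  "torus3 = {y. \<forall>i. 0 \<le> y $ i \<and> y $ i \<le> 1}"

definition int_lattice3 :: "(real^3) set" where
  "int_lattice3 = {k. \<forall>i. k $ i \<in> \<int>}"

definition beta1 :: "real \<Rightarrow> real^3" where
  "beta1 z = vector [0, 0, z]"

definition beta2 :: "real^2 \<Rightarrow> real^3" where
  "beta2 z = vector [z $ 1, z $ 2, 0]"

definition radon_measure :: "'a::euclidean_space measure \<Rightarrow> bool" where
  "radon_measure q \<longleftrightarrow> sets q = sets borel \<and> (\<forall>K. compact K \<longrightarrow> emeasure q K < \<infinity>)"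

definition levy_moment_cond :: "'a::euclidean_space measure \<Rightarrow> bool" where
  "levy_moment_cond q \<longleftrightarrow>
     (\<integral>\<^sup>+ z. ennreal (if norm z < 1 then (norm z)\<^sup>2 else norm z) \<partial>q) < \<infinity>"

definition usc :: "('a::topological_space \<Rightarrow> real) \<Rightarrow> bool" where
  "usc u \<longleftrightarrow> (\<forall>c. open {y. u y < c})"

definition msupp :: "'a::topological_space measure \<Rightarrow> 'a set" where
  "msupp q = {z. \<forall>U. open U \<longrightarrow> z \<in> U \<longrightarrow> emeasure q U > 0}"

definition jump_step :: "'a::topological_space measure \<Rightarrow> ('a \<Rightarrow> real^3) \<Rightarrow> real^3 \<Rightarrow> real^3 \<Rightarrow> real \<Rightarrow> bool" where
  "jump_step q beta a b eps \<longleftrightarrow>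
     (\<exists>J. J \<subseteq> msupp q \<and> J \<in> sets q \<and> emeasure q J > 0 \<and>
          (\<forall>z\<in>J. \<exists>k\<in>int_lattice3. a + beta z + k \<in> ball b eps))"

definition condition_B' :: "real measure \<Rightarrow> (real^2) measure \<Rightarrow> bool" where
  "condition_B' q1 q2 \<longleftrightarrow>
     (\<forall>y\<in>torus3. \<forall>y'\<in>torus3. \<exists>m::nat. \<exists>ys::nat \<Rightarrow> real^3.
        m \<ge> 1 \<and> ys 1 = y \<and> ys m = y' \<and> (\<forall>i\<in>{1..m}. ys i \<in> torus3) \<and>
        (\<forall>eps::nat \<Rightarrow> real. (\<forall>i\<in>{1..m}. eps i > 0) \<longrightarrow>
           (\<forall>i\<in>{1..<m}. jump_step q1 beta1 (ys i) (ys (Suc i)) (eps i) \<or>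
                         jump_step q2 beta2 (ys i) (ys (Suc i)) (eps i))))"

definition C2_grad :: "(real^3 \<Rightarrow> real) \<Rightarrow> (real^3 \<Rightarrow> real^3) \<Rightarrow> bool" where
  "C2_grad phi g \<longleftrightarrow>
     (\<forall>x. (phi has_derivative (\<lambda>h. g x \<bullet> h)) (at x)) \<and>
     (\<exists>D :: real^3 \<Rightarrow> ((real^3) \<Rightarrow>\<^sub>L (real^3)).
        (\<forall>x. (g has_derivative blinfun_apply (D x)) (at x)) \<and> continuous_on UNIV D)"

definition nonlocal :: "'a measure \<Rightarrow> ('a \<Rightarrow> real^3) \<Rightarrow> (real^3 \<Rightarrow> real) \<Rightarrow> real^3 \<Rightarrow> real^3 \<Rightarrow> real" where
  "nonlocal q beta u y p = (\<integral>z. (u (y + beta z) - u y - beta z \<bullet> p) \<partial>q)"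

definition nonlocal_integrable :: "'a measure \<Rightarrow> ('a \<Rightarrow> real^3) \<Rightarrow> (real^3 \<Rightarrow> real) \<Rightarrow> real^3 \<Rightarrow> real^3 \<Rightarrow> bool" where
  "nonlocal_integrable q beta u y p \<longleftrightarrow> integrable q (\<lambda>z. u (y + beta z) - u y - beta z \<bullet> p)"

definition visc_subsolution ::
  "(real^3 \<Rightarrow> real^3 \<Rightarrow> real) \<Rightarrow> real measure \<Rightarrow> (real^2) measure \<Rightarrow> (real^3 \<Rightarrow> real) \<Rightarrow> bool" where
  "visc_subsolution H q1 q2 u \<longleftrightarrow>
     (\<forall>yh phi g. C2_grad phi g \<longrightarrow> (\<forall>y. u y - phi y \<le> u yh - phi yh) \<longrightarrow> u yh = phi yh \<longrightarrow>
        nonlocal_integrable q1 beta1 u yh (g yh) \<and> nonlocal_integrable q2 beta2 u yh (g yh) \<and>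
        H yh (g yh) + max (- nonlocal q1 beta1 u yh (g yh)) (- nonlocal q2 beta2 u yh (g yh)) \<le> 0)"

end

theory Submission
  imports Defs
begin

text \<open>At a point where \<open>u\<close> attains its global maximum the constant function is an admissible test
  function with zero gradient. Both nonlocal integrands are then nonpositive, while \<open>H(y,0) \<ge> 0\<close>
  forces both integrals to be nonnegative; so \<open>u(y + \<beta>\<^sub>l(z)) = max u\<close> for \<open>q\<^sub>l\<close>-almost every \<open>z\<close>.
  By condition (B') every point of the torus is reached from the maximum point by finitely many
  jumps landing, on sets of positive measure, in arbitrarily small balls; by upper semicontinuity
  the set \<open>{u < max u}\<close> is open, so it cannot contain any point of the chain.\<close>

lemma lattice_translate_in_torus3:
  obtains k where "k \<in> int_lattice3" "y + k \<in> torus3"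
proof
  define k :: "real^3" where "k = (\<chi> i. - of_int \<lfloor>y $ i\<rfloor>)"
  show "k \<in> int_lattice3" unfolding int_lattice3_def k_def by auto
  show "y + k \<in> torus3" unfolding torus3_def k_def
    by (auto simp: of_int_floor_le) (smt (verit) floor_correct of_int_add of_int_1)
qed

lemma periodic_le_if_le_on_torus3:
  assumes "\<And>y k. k \<in> int_lattice3 \<Longrightarrow> u (y + k) = u y"
    and "\<And>y. y \<in> torus3 \<Longrightarrow> u y \<le> M"
  shows "u y \<le> M"
proof -
  obtain k where "k \<in> int_lattice3" "y + k \<in> torus3" by (rule lattice_translate_in_torus3)
  then show ?thesis using assms by metis
qed

lemma C2_grad_const: "C2_grad (\<lambda>x. c) (\<lambda>x. 0)"
proof -
  have "(\<bullet>) (0::real^3) = (\<lambda>h. 0)" "blinfun_apply (0 :: (real^3) \<Rightarrow>\<^sub>L (real^3)) = (\<lambda>h. 0)"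
    by auto
  then show ?thesis
    unfolding C2_grad_def by (intro conjI allI exI[of _ "\<lambda>x. 0"]) simp_all
qed

lemma AE_eq_0_if_nonpos_integral_nonneg:
  fixes f :: "'a \<Rightarrow> real"
  assumes "integrable q f" "integral\<^sup>L q f \<ge> 0" "\<And>z. f z \<le> 0"
  shows "AE z in q. f z = 0"
proof -
  have "integral\<^sup>L q (\<lambda>z. - f z) = 0"
    using integral_nonneg_AE[of "\<lambda>z. - f z" q] assms(2,3) by simp
  then have "AE z in q. - f z = 0"
    using integral_nonneg_eq_0_iff_AE[of q "\<lambda>z. - f z"] assms(1,3) by simp
  then show ?thesis by simp
qed

lemma AE_obtain_in_positive_set:
  assumes "AE x in M. P x" "J \<in> sets M" "emeasure M J > 0"
  obtains x where "x \<in> J" "P x"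
proof -
  obtain N where "{x \<in> space M. \<not> P x} \<subseteq> N" "emeasure M N = 0" "N \<in> sets M"
    using assms(1) by (rule AE_E)
  moreover have "J \<subseteq> N" if "\<nexists>x. x \<in> J \<and> P x"
    using that calculation(1) sets.sets_into_space[OF assms(2)] by auto
  ultimately show ?thesis
    using emeasure_mono[of J N M] assms(3) that by fastforce
qed

lemma visc_subsolution_AE_at_max:
  assumes "visc_subsolution H q1 q2 u" "H y 0 \<ge> 0" "\<And>x. u x \<le> u y"
  shows "(AE z in q1. u (y + beta1 z) = u y) \<and> (AE z in q2. u (y + beta2 z) = u y)"
proof -
  have "nonlocal_integrable q1 beta1 u y 0 \<and> nonlocal_integrable q2 beta2 u y 0 \<and>
      H y 0 + max (- nonlocal q1 beta1 u y 0) (- nonlocal q2 beta2 u y 0) \<le> 0"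
    using assms(1,3) C2_grad_const[of "u y"] unfolding visc_subsolution_def by fastforce
  then have "integrable q1 (\<lambda>z. u (y + beta1 z) - u y)" "integral\<^sup>L q1 (\<lambda>z. u (y + beta1 z) - u y) \<ge> 0"
      "integrable q2 (\<lambda>z. u (y + beta2 z) - u y)" "integral\<^sup>L q2 (\<lambda>z. u (y + beta2 z) - u y) \<ge> 0"
    using assms(2) unfolding nonlocal_integrable_def nonlocal_def by auto
  then show ?thesis
    using AE_eq_0_if_nonpos_integral_nonneg[of q1 "\<lambda>z. u (y + beta1 z) - u y"]
      AE_eq_0_if_nonpos_integral_nonneg[of q2 "\<lambda>z. u (y + beta2 z) - u y"] assms(3)
    by auto
qed

lemma jump_step_reaches_value:
  assumes "jump_step q beta a b e" "AE z in q. u (a + beta z) = M"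
    and "\<And>y k. k \<in> int_lattice3 \<Longrightarrow> u (y + k) = u y"
  shows "\<exists>w\<in>ball b e. u w = M"
proof -
  obtain J where J: "J \<in> sets q" "emeasure q J > 0"
    and near: "\<forall>z\<in>J. \<exists>k\<in>int_lattice3. a + beta z + k \<in> ball b e"
    using assms(1) unfolding jump_step_def by blast
  obtain z where "z \<in> J" "u (a + beta z) = M"
    using AE_obtain_in_positive_set[OF assms(2) J] .
  moreover obtain k where "k \<in> int_lattice3" "a + beta z + k \<in> ball b e"
    using near \<open>z \<in> J\<close> by blast
  ultimately show ?thesis using assms(3)[of k "a + beta z"] by auto
qed

lemma usc_less_ball:
  assumes "usc u" "u b < M"
  obtains e where "e > 0" "ball b e \<subseteq> {x. u x < M}"
  using assms open_contains_ball unfolding usc_def by blast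

lemma condition_B'_propagates_max:
  assumes "condition_B' q1 q2" "usc u"
    and periodic: "\<And>y k. k \<in> int_lattice3 \<Longrightarrow> u (y + k) = u y"
    and le_M: "\<And>x. u x \<le> M"
    and AE_max: "\<And>a. u a = M \<Longrightarrow>
      (AE z in q1. u (a + beta1 z) = M) \<and> (AE z in q2. u (a + beta2 z) = M)"
    and "y \<in> torus3" "y' \<in> torus3" "u y = M"
  shows "u y' = M"
proof -
  obtain m ys where m: "m \<ge> 1" "ys 1 = y" "ys m = y'"
    and chain: "\<forall>eps::nat \<Rightarrow> real. (\<forall>i\<in>{1..m}. eps i > 0) \<longrightarrow>
      (\<forall>i\<in>{1..<m}. jump_step q1 beta1 (ys i) (ys (Suc i)) (eps i) \<or>
                    jump_step q2 beta2 (ys i) (ys (Suc i)) (eps i))"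
    using assms(1)[unfolded condition_B'_def, rule_format, OF assms(6,7)] by blast
  have step: "u (ys (Suc i)) = M" if "i \<in> {1..<m}" "u (ys i) = M" for i
  proof (rule ccontr)
    assume "u (ys (Suc i)) \<noteq> M"
    then have "u (ys (Suc i)) < M" using le_M order_less_le by blast
    then obtain e where "e > 0" and ball: "ball (ys (Suc i)) e \<subseteq> {x. u x < M}"
      by (rule usc_less_ball[OF assms(2)])
    have "jump_step q1 beta1 (ys i) (ys (Suc i)) e \<or> jump_step q2 beta2 (ys i) (ys (Suc i)) e"
      using chain[rule_format, of "\<lambda>_. e"] \<open>e > 0\<close> that(1) by blast
    then have "\<exists>w\<in>ball (ys (Suc i)) e. u w = M"
      using AE_max[OF that(2)] periodic by (auto intro: jump_step_reaches_value)
    then show False using ball by auto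
  qed
  have "u (ys (Suc j)) = M" if "Suc j \<le> m" for j
    using that
  proof (induction j)
    case 0
    then show ?case using m assms(8) by simp
  next
    case (Suc j)
    then show ?case using step[of "Suc j"] by simp
  qed
  from this[of "m - 1"] show ?thesis using m by simp
qed

theorem theorem5p1:
  fixes q1 :: "real measure" and q2 :: "(real^2) measure"
    and H :: "real^3 \<Rightarrow> real^3 \<Rightarrow> real" and u :: "real^3 \<Rightarrow> real" and ybar :: "real^3"
  assumes "radon_measure q1" and "radon_measure q2"
    and "levy_moment_cond q1" and "levy_moment_cond q2"
    and "condition_B' q1 q2"
    and "continuous_on UNIV (\<lambda>(y, p). H y p)"
    and "\<And>y p k. k \<in> int_lattice3 \<Longrightarrow> H (y + k) p = H y p"
    and "\<And>y. H y 0 \<ge> 0"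
    and "usc u"
    and "\<And>y k. k \<in> int_lattice3 \<Longrightarrow> u (y + k) = u y"
    and "visc_subsolution H q1 q2 u"
    and "ybar \<in> torus3" and "\<And>y. y \<in> torus3 \<Longrightarrow> u y \<le> u ybar"
  shows "\<forall>y\<in>torus3. u y = u ybar"
proof
  fix y assume "y \<in> torus3"
  have le_max: "u x \<le> u ybar" for x
    using periodic_le_if_le_on_torus3[of u "u ybar"] assms(10,13) by blast
  have "(AE z in q1. u (a + beta1 z) = u ybar) \<and> (AE z in q2. u (a + beta2 z) = u ybar)"
    if "u a = u ybar" for a
    using visc_subsolution_AE_at_max[OF assms(11) assms(8), of a] le_max that by simp
  then show "u y = u ybar"
    using condition_B'_propagates_max[OF assms(5,9,10) le_max] assms(12) \<open>y \<in> torus3\<close> by blast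
qed

end
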